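(* Let $k$ be an algebraically closed field of characteristic $0$, $d\ge3$, $n\ge1$, and let $V_n$ have basis $v_1,\dots,v_n$ with symmetric $d$-linear form $\Theta_d(v_{i_1},\dots,v_{i_d})=1$ if $i_1+\dots+i_d=(d-1)n+1$ and $0$ otherwise. Then the center $\mathrm{Cent}_k(V_n,\Theta_d)=\{f\in\mathrm{End}_k(V_n):\Theta_d(fu_1,u_2,\dots,u_d)=\Theta_d(u_1,fu_2,\dots,u_d)\ \forall u_i\}$ is a maximal commutative subalgebra of $\mathrm{End}_k(V_n)$.
   Context: The map $\psi(v_i)=v_{i-1}$ ($v_0=0$) belongs to the center, and the center equals $k[\psi]$. *)

theory Defs
  imports "HOL-Computational_Algebra.Polynomial" "HOL-Library.FuncSet"
begin

text \<open>V_n is modelled as functions nat => 'a supported on {1..n}; coordinate i is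
  the coefficient of the basis vector v_i.\<close>

definition vecs :: "nat \<Rightarrow> (nat \<Rightarrow> 'a::field) set" where
  "vecs n = {v. \<forall>i. i \<notin> {1..n} \<longrightarrow> v i = 0}"

definition mats :: "nat \<Rightarrow> (nat \<Rightarrow> nat \<Rightarrow> 'a::field) set" where
  "mats n = {M. \<forall>i j. (i \<notin> {1..n} \<or> j \<notin> {1..n}) \<longrightarrow> M i j = 0}"

definition mapply :: "nat \<Rightarrow> (nat \<Rightarrow> nat \<Rightarrow> 'a::field) \<Rightarrow> (nat \<Rightarrow> 'a) \<Rightarrow> (nat \<Rightarrow> 'a)" where
  "mapply n M v = (\<lambda>i. if i \<in> {1..n} then (\<Sum>j=1..n. M i j * v j) else 0)"

definition mmult :: "nat \<Rightarrow> (nat \<Rightarrow> nat \<Rightarrow> 'a::field) \<Rightarrow> (nat \<Rightarrow> nat \<Rightarrow> 'a) \<Rightarrow> (nat \<Rightarrow> nat \<Rightarrow> 'a)" where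
  "mmult n A B = (\<lambda>i k. if i \<in> {1..n} \<and> k \<in> {1..n} then (\<Sum>j=1..n. A i j * B j k) else 0)"

definition mone :: "nat \<Rightarrow> (nat \<Rightarrow> nat \<Rightarrow> 'a::field)" where
  "mone n = (\<lambda>i j. if i = j \<and> i \<in> {1..n} then 1 else 0)"

text \<open>The symmetric d-linear form Theta_d, extended multilinearly from its values on
  basis vectors: Theta_d(v_{i_1},...,v_{i_d}) = 1 iff i_1+...+i_d = (d-1)n+1.
  Arguments are indexed u 0, ..., u (d-1).\<close>

definition Theta :: "nat \<Rightarrow> nat \<Rightarrow> (nat \<Rightarrow> nat \<Rightarrow> 'a::field) \<Rightarrow> 'a" where
  "Theta d n u = (\<Sum>idx \<in> {idx \<in> Pi\<^sub>E {..<d} (\<lambda>_. {1..n}). (\<Sum>j<d. idx j) = (d - 1) * n + 1}.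
                    \<Prod>j<d. u j (idx j))"

definition centre :: "nat \<Rightarrow> nat \<Rightarrow> (nat \<Rightarrow> nat \<Rightarrow> 'a::field) set" where
  "centre d n = {f \<in> mats n. \<forall>u. (\<forall>j<d. u j \<in> vecs n) \<longrightarrow>
       Theta d n (u(0 := mapply n f (u 0))) = Theta d n (u(1 := mapply n f (u 1)))}"

definition subalgebra :: "nat \<Rightarrow> (nat \<Rightarrow> nat \<Rightarrow> 'a::field) set \<Rightarrow> bool" where
  "subalgebra n A \<longleftrightarrow> A \<subseteq> mats n \<and> mone n \<in> A
     \<and> (\<forall>a\<in>A. \<forall>b\<in>A. (\<lambda>i j. a i j + b i j) \<in> A)
     \<and> (\<forall>c. \<forall>a\<in>A. (\<lambda>i j. c * a i j) \<in> A)
     \<and> (\<forall>a\<in>A. \<forall>b\<in>A. mmult n a b \<in> A)"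

definition commutative_set :: "nat \<Rightarrow> (nat \<Rightarrow> nat \<Rightarrow> 'a::field) set \<Rightarrow> bool" where
  "commutative_set n A \<longleftrightarrow> (\<forall>a\<in>A. \<forall>b\<in>A. mmult n a b = mmult n b a)"

definition maximal_comm_subalgebra :: "nat \<Rightarrow> (nat \<Rightarrow> nat \<Rightarrow> 'a::field) set \<Rightarrow> bool" where
  "maximal_comm_subalgebra n A \<longleftrightarrow> subalgebra n A \<and> commutative_set n A
     \<and> (\<forall>B. subalgebra n B \<and> commutative_set n B \<and> A \<subseteq> B \<longrightarrow> B = A)"

end

theory Submission
  imports Defs
begin

(* Identify V_n with a space of polynomials via v_i |-> X^i.  Then Theta_d(u_1, ..., u_d) is the
   coefficient of X^((d-1)n+1) in the product of the u_j, and X * psi(w) agrees with w up to terms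
   of degree <= 1.  The product of the remaining d - 1 arguments has degree <= (d-1)n, so these
   low-order errors never reach the relevant coefficient: Theta(psi^t u_1, u_2, ...) is the
   coefficient of X^((d-1)n+1+t) in the full product, which is symmetric in the arguments.  Hence
   k[psi] is central.  Conversely, testing the centre condition on basis vectors (with a third slot
   available since d >= 3) shows that a central map is upper triangular Toeplitz, i.e. lies in
   k[psi].  Finally k[psi] is commutative, and every matrix commuting with psi is again upper
   triangular Toeplitz, which gives maximality. *)

lemma prod_monom:
  "finite A \<Longrightarrow> (\<Prod>x\<in>A. monom (c x) (m x)) = monom (\<Prod>x\<in>A. c x) (\<Sum>x\<in>A. m x)"
  by (induction A rule: finite_induct) (simp_all add: mult_monom)

lemma coeff_mult_shift:
  fixes p q r :: "'a::comm_ring_1 poly"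
  assumes "degree (p - monom 1 t * r) \<le> t" and "degree q < m"
  shows "coeff (p * q) (m + t) = coeff (r * q) m"
proof -
  have "p * q = monom 1 t * (r * q) + (p - monom 1 t * r) * q"
    by (simp add: ring_distribs mult.assoc)
  moreover have "coeff ((p - monom 1 t * r) * q) (m + t) = 0"
    by (rule coeff_eq_0) (use degree_mult_le[of "p - monom 1 t * r" q] assms in linarith)
  ultimately show ?thesis
    by (simp add: coeff_monom_mult)
qed

definition vec_poly :: "nat \<Rightarrow> (nat \<Rightarrow> 'a::field) \<Rightarrow> 'a poly" where
  "vec_poly n w = (\<Sum>i=1..n. monom (w i) i)"

lemma coeff_vec_poly: "coeff (vec_poly n w) i = (if i \<in> {1..n} then w i else 0)"
  by (simp add: vec_poly_def coeff_sum)

lemma degree_vec_poly_le: "degree (vec_poly n w) \<le> n"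
  by (rule degree_le) (simp add: coeff_vec_poly)

lemma vec_poly_lincomb:
  "finite T \<Longrightarrow> vec_poly n (\<lambda>a. \<Sum>t\<in>T. c t * g t a) = (\<Sum>t\<in>T. smult (c t) (vec_poly n (g t)))"
  by (rule poly_eqI) (auto simp: coeff_vec_poly coeff_sum)

lemma Theta_eq_coeff_prod:
  "Theta d n u = coeff (\<Prod>j<d. vec_poly n (u j)) ((d - 1) * n + 1)"
proof -
  let ?I = "Pi\<^sub>E {..<d} (\<lambda>_. {1..n})"
  have "(\<Prod>j<d. vec_poly n (u j)) = (\<Sum>idx\<in>?I. \<Prod>j<d. monom (u j (idx j)) (idx j))"
    unfolding vec_poly_def by (rule prod_sum_PiE) auto
  also have "\<dots> = (\<Sum>idx\<in>?I. monom (\<Prod>j<d. u j (idx j)) (\<Sum>j<d. idx j))"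
    by (simp add: prod_monom)
  finally show ?thesis
    by (simp add: Theta_def coeff_sum sum.inter_filter finite_PiE)
qed

lemma prod_vec_poly_fun_upd:
  fixes d k :: nat
  assumes "k < d"
  shows "(\<Prod>j<d. vec_poly n ((u(k := w)) j)) = vec_poly n w * (\<Prod>j\<in>{..<d}-{k}. vec_poly n (u j))"
proof -
  have "(\<Prod>j<d. vec_poly n ((u(k := w)) j)) = vec_poly n ((u(k := w)) k) * (\<Prod>j\<in>{..<d}-{k}. vec_poly n ((u(k := w)) j))"
    by (rule prod.remove) (use assms in auto)
  also have "(\<Prod>j\<in>{..<d}-{k}. vec_poly n ((u(k := w)) j)) = (\<Prod>j\<in>{..<d}-{k}. vec_poly n (u j))"
    by (rule prod.cong) auto
  finally show ?thesis by simp
qed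

lemma degree_prod_vec_poly_le:
  fixes d k :: nat
  assumes "k < d"
  shows "degree (\<Prod>j\<in>{..<d}-{k}. vec_poly n (u j)) \<le> (d - 1) * n"
proof -
  have "degree (\<Prod>j\<in>{..<d}-{k}. vec_poly n (u j)) \<le> (\<Sum>j\<in>{..<d}-{k}. degree (vec_poly n (u j)))"
    using degree_prod_sum_le[of "{..<d}-{k}" "\<lambda>j. vec_poly n (u j)"] by (simp add: o_def)
  also have "\<dots> \<le> (\<Sum>j\<in>{..<d}-{k}. n)"
    by (rule sum_mono) (rule degree_vec_poly_le)
  also have "\<dots> = (d - 1) * n"
    using assms by simp
  finally show ?thesis .
qed

(* The coordinates of psi^t w, where psi v_i = v_(i-1) and v_0 = 0. *)
definition psi_pow :: "nat \<Rightarrow> nat \<Rightarrow> (nat \<Rightarrow> 'a::field) \<Rightarrow> nat \<Rightarrow> 'a" where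
  "psi_pow n t w = (\<lambda>a. if a \<in> {1..n} \<and> a + t \<le> n then w (a + t) else 0)"

lemma degree_vec_poly_psi_pow:
  "degree (vec_poly n w - monom 1 t * vec_poly n (psi_pow n t w)) \<le> t"
  by (rule degree_le) (auto simp: coeff_monom_mult coeff_vec_poly psi_pow_def)

(* The matrix of p(psi). *)
definition poly_mat :: "nat \<Rightarrow> 'a::field poly \<Rightarrow> nat \<Rightarrow> nat \<Rightarrow> 'a" where
  "poly_mat n p = (\<lambda>i j. if i \<in> {1..n} \<and> j \<in> {1..n} \<and> i \<le> j then coeff p (j - i) else 0)"

abbreviation psi :: "nat \<Rightarrow> nat \<Rightarrow> nat \<Rightarrow> 'a::field" where
  "psi n \<equiv> poly_mat n (monom 1 1)"

lemma mapply_poly_mat: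
  "mapply n (poly_mat n p) w = (\<lambda>a. \<Sum>t<n. coeff p t * psi_pow n t w a)"
proof
  fix a
  show "mapply n (poly_mat n p) w a = (\<Sum>t<n. coeff p t * psi_pow n t w a)"
  proof (cases "a \<in> {1..n}")
    case False
    then show ?thesis by (auto simp: mapply_def psi_pow_def)
  next
    case True
    have "mapply n (poly_mat n p) w a = (\<Sum>j\<in>{1..n}. if a \<le> j then coeff p (j - a) * w j else 0)"
      using True by (auto simp: mapply_def poly_mat_def intro!: sum.cong)
    also have "\<dots> = (\<Sum>j\<in>{j\<in>{1..n}. a \<le> j}. coeff p (j - a) * w j)"
      by (rule sum.inter_filter[symmetric]) simp
    also have "\<dots> = (\<Sum>t\<in>{t\<in>{..<n}. a + t \<le> n}. coeff p t * w (a + t))"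
      by (rule sum.reindex_bij_witness[where j="\<lambda>j. j - a" and i="\<lambda>t. a + t"]) (use True in auto)
    also have "\<dots> = (\<Sum>t<n. if a + t \<le> n then coeff p t * w (a + t) else 0)"
      by (rule sum.inter_filter) simp
    also have "\<dots> = (\<Sum>t<n. coeff p t * psi_pow n t w a)"
      using True by (auto simp: psi_pow_def intro!: sum.cong)
    finally show ?thesis .
  qed
qed

lemma Theta_fun_upd_poly_mat:
  assumes "k < d"
  shows "Theta d n (u(k := mapply n (poly_mat n p) (u k)))
    = (\<Sum>t<n. coeff p t * coeff (\<Prod>j<d. vec_poly n (u j)) ((d - 1) * n + 1 + t))"
proof -
  let ?Q = "\<Prod>j\<in>{..<d}-{k}. vec_poly n (u j)"
  have prod_split: "(\<Prod>j<d. vec_poly n (u j)) = vec_poly n (u k) * ?Q"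
    using prod_vec_poly_fun_upd[OF assms, of n u "u k"] by simp
  have deg_Q: "degree ?Q < (d - 1) * n + 1"
    using degree_prod_vec_poly_le[OF assms, of n u] by simp
  have shift: "coeff (vec_poly n (psi_pow n t (u k)) * ?Q) ((d - 1) * n + 1)
      = coeff (\<Prod>j<d. vec_poly n (u j)) ((d - 1) * n + 1 + t)" for t
    using coeff_mult_shift[OF degree_vec_poly_psi_pow[of n "u k" t] deg_Q] by (simp add: prod_split)
  have "Theta d n (u(k := mapply n (poly_mat n p) (u k)))
      = coeff ((\<Sum>t<n. smult (coeff p t) (vec_poly n (psi_pow n t (u k)))) * ?Q) ((d - 1) * n + 1)"
    unfolding Theta_eq_coeff_prod prod_vec_poly_fun_upd[OF assms] mapply_poly_mat
      vec_poly_lincomb[OF finite_lessThan] ..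
  also have "\<dots> = (\<Sum>t<n. coeff p t * coeff (vec_poly n (psi_pow n t (u k)) * ?Q) ((d - 1) * n + 1))"
    by (simp add: sum_distrib_right coeff_sum)
  finally show ?thesis
    by (simp only: shift)
qed

lemma poly_mat_in_mats: "poly_mat n p \<in> mats n"
  by (simp add: mats_def poly_mat_def)

lemma poly_mat_in_centre:
  assumes "d \<ge> 2"
  shows "poly_mat n p \<in> centre d n"
proof -
  have "Theta d n (u(0 := mapply n (poly_mat n p) (u 0))) = Theta d n (u(1 := mapply n (poly_mat n p) (u 1)))"
    for u :: "nat \<Rightarrow> nat \<Rightarrow> 'a"
    using assms by (simp only: Theta_fun_upd_poly_mat)
  then show ?thesis
    by (simp add: centre_def poly_mat_in_mats)
qed

definition basis_vec :: "nat \<Rightarrow> nat \<Rightarrow> 'a::field" where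
  "basis_vec a = (\<lambda>i. if i = a then 1 else 0)"

lemma basis_vec_in_vecs: "a \<in> {1..n} \<Longrightarrow> basis_vec a \<in> vecs n"
  by (simp add: basis_vec_def vecs_def)

lemma vec_poly_basis_vec: "a \<in> {1..n} \<Longrightarrow> vec_poly n (basis_vec a) = monom 1 a"
  by (rule poly_eqI) (auto simp: coeff_vec_poly basis_vec_def)

lemma mapply_basis_vec: "i \<in> {1..n} \<Longrightarrow> a \<in> {1..n} \<Longrightarrow> mapply n f (basis_vec i) a = f a i"
  by (simp add: mapply_def basis_vec_def if_distrib cong: if_cong)

lemma Theta_fun_upd_basis_vecs:
  fixes d k :: nat
  assumes "k < d" and "\<And>j. j < d \<Longrightarrow> j \<noteq> k \<Longrightarrow> p j \<in> {1..n}"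
    and "(\<Sum>j\<in>{..<d}-{k}. p j) \<le> (d - 1) * n + 1"
  shows "Theta d n ((\<lambda>j. basis_vec (p j))(k := w))
    = coeff (vec_poly n w) ((d - 1) * n + 1 - (\<Sum>j\<in>{..<d}-{k}. p j))"
proof -
  have "(\<Prod>j\<in>{..<d}-{k}. vec_poly n (basis_vec (p j)) :: 'a poly) = (\<Prod>j\<in>{..<d}-{k}. monom 1 (p j))"
    by (rule prod.cong) (use assms(2) in \<open>auto simp: vec_poly_basis_vec\<close>)
  also have "\<dots> = monom 1 (\<Sum>j\<in>{..<d}-{k}. p j)"
    by (simp add: prod_monom)
  finally show ?thesis
    unfolding Theta_eq_coeff_prod prod_vec_poly_fun_upd[OF assms(1)]
    using assms(3) by (simp add: mult.commute[of _ "monom 1 _"] coeff_monom_mult)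
qed

lemma centre_entry_eq:
  assumes "d \<ge> 3" and f: "f \<in> centre d n" and a: "a \<in> {1..n}" and i: "i \<in> {1..n}"
  shows "f a i = (if a \<le> i then f (n + a - i) n else 0)"
proof -
  obtain D where D: "d = D + 3"
    using assms(1) by (metis add.commute le_iff_add)
  (* Test the centre condition on v_i, v_n, v_(n+1-a), v_n, ..., v_n: applying f in slot 0
     reads off f a i, applying it in slot 1 reads off f (n + a - i) n. *)
  define p where "p j = (if j = 0 then i else if j = 2 then n + 1 - a else n)" for j :: nat
  have p_range: "p j \<in> {1..n}" for j
    using a i by (auto simp: p_def)
  have others: "(\<Sum>j\<in>{..<d}-{k}. p j) = p (1 - k) + (n + 1 - a) + D * n" if "k \<in> {0, 1}" for k
  proof -
    have "{..<d}-{k} = insert (1 - k) (insert 2 {3..<d})" and "1 - k \<notin> insert 2 {3..<d}"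
      using that D by auto
    then show ?thesis
      by (simp add: p_def D)
  qed
  let ?u = "\<lambda>j. basis_vec (p j) :: nat \<Rightarrow> 'a"
  have s0: "(\<Sum>j\<in>{..<d}-{0}. p j) \<le> (d - 1) * n + 1"
    "(d - 1) * n + 1 - (\<Sum>j\<in>{..<d}-{0}. p j) = a"
    using others[of 0] a D by (simp_all add: p_def algebra_simps)
  have "Theta d n (?u(0 := mapply n f (?u 0))) = coeff (vec_poly n (mapply n f (?u 0))) a"
    unfolding s0(2)[symmetric] by (rule Theta_fun_upd_basis_vecs) (use D p_range s0 in auto)
  also have "\<dots> = f a i"
    using a i by (simp add: coeff_vec_poly mapply_basis_vec p_def)
  finally have slot0: "Theta d n (?u(0 := mapply n f (?u 0))) = f a i" .
  have s1: "(\<Sum>j\<in>{..<d}-{1}. p j) \<le> (d - 1) * n + 1"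
    "(d - 1) * n + 1 - (\<Sum>j\<in>{..<d}-{1}. p j) = n + a - i"
    using others[of 1] a i D by (auto simp: p_def algebra_simps)
  have "Theta d n (?u(1 := mapply n f (?u 1))) = coeff (vec_poly n (mapply n f (?u 1))) (n + a - i)"
    unfolding s1(2)[symmetric] by (rule Theta_fun_upd_basis_vecs) (use D p_range s1 in auto)
  also have "\<dots> = (if a \<le> i then f (n + a - i) n else 0)"
    using a i by (auto simp: coeff_vec_poly mapply_basis_vec p_def)
  finally have slot1: "Theta d n (?u(1 := mapply n f (?u 1))) = (if a \<le> i then f (n + a - i) n else 0)" .
  have "\<forall>j<d. ?u j \<in> vecs n"
    using p_range by (simp add: basis_vec_in_vecs)
  moreover have "Theta d n (u(0 := mapply n f (u 0))) = Theta d n (u(1 := mapply n f (u 1)))"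
    if "\<forall>j<d. u j \<in> vecs n" for u
    using f that unfolding centre_def by blast
  ultimately show ?thesis
    using slot0 slot1 by metis
qed

lemma poly_mat_eqI:
  assumes "M \<in> mats n"
    and "\<And>i j. i \<in> {1..n} \<Longrightarrow> j \<in> {1..n} \<Longrightarrow> M i j = (if i \<le> j then c (j - i) else 0)"
  shows "M = poly_mat n (\<Sum>t<n. monom (c t) t)"
proof (intro ext)
  fix i j
  show "M i j = poly_mat n (\<Sum>t<n. monom (c t) t) i j"
    using assms by (cases "i \<in> {1..n} \<and> j \<in> {1..n}") (auto simp: mats_def poly_mat_def coeff_sum)
qed

lemma centre_eq_range_poly_mat:
  assumes "d \<ge> 3"
  shows "centre d n = range (poly_mat n)"
proof (intro equalityI subsetI)
  fix f :: "nat \<Rightarrow> nat \<Rightarrow> 'a"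
  assume f: "f \<in> centre d n"
  have "f \<in> mats n"
    using f by (simp add: centre_def)
  then have "f = poly_mat n (\<Sum>t<n. monom (f (n - t) n) t)"
    by (rule poly_mat_eqI) (auto simp: centre_entry_eq[OF assms f] intro!: arg_cong[where f = "\<lambda>x. f x n"])
  then show "f \<in> range (poly_mat n)"
    by (rule image_eqI) simp
next
  fix f :: "nat \<Rightarrow> nat \<Rightarrow> 'a"
  assume "f \<in> range (poly_mat n)"
  then show "f \<in> centre d n"
    using assms poly_mat_in_centre[of d n] by auto
qed

lemma poly_mat_1: "poly_mat n 1 = mone n"
  by (intro ext) (auto simp: poly_mat_def mone_def)

lemma poly_mat_add: "(\<lambda>i j. poly_mat n p i j + poly_mat n q i j) = poly_mat n (p + q)"
  by (intro ext) (auto simp: poly_mat_def)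

lemma poly_mat_smult: "(\<lambda>i j. c * poly_mat n p i j) = poly_mat n (smult c p)"
  by (intro ext) (auto simp: poly_mat_def)

lemma mmult_poly_mat: "mmult n (poly_mat n p) (poly_mat n q) = poly_mat n (p * q)"
proof (intro ext)
  fix i k
  show "mmult n (poly_mat n p) (poly_mat n q) i k = poly_mat n (p * q) i k"
  proof (cases "i \<in> {1..n} \<and> k \<in> {1..n} \<and> i \<le> k")
    case False
    then have "poly_mat n p i j * poly_mat n q j k = 0" for j
      by (auto simp: poly_mat_def)
    then show ?thesis
      using False by (auto simp: mmult_def poly_mat_def[of n "p * q"] intro!: sum.neutral)
  next
    case True
    have "mmult n (poly_mat n p) (poly_mat n q) i k
        = (\<Sum>j\<in>{1..n}. if i \<le> j \<and> j \<le> k then coeff p (j - i) * coeff q (k - j) else 0)"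
      using True by (auto simp: mmult_def poly_mat_def intro!: sum.cong)
    also have "\<dots> = (\<Sum>j\<in>{i..k}. coeff p (j - i) * coeff q (k - j))"
      using True by (intro sum.mono_neutral_cong_right) auto
    also have "\<dots> = (\<Sum>s\<le>k - i. coeff p s * coeff q (k - i - s))"
      by (rule sum.reindex_bij_witness[where j = "\<lambda>j. j - i" and i = "\<lambda>s. i + s"]) (use True in auto)
    also have "\<dots> = poly_mat n (p * q) i k"
      using True by (simp add: poly_mat_def coeff_mult)
    finally show ?thesis .
  qed
qed

lemma mmult_psi_right:
  assumes "i \<in> {1..n}" and "k \<in> {1..n}"
  shows "mmult n g (psi n) i k = (if 2 \<le> k then g i (k - 1) else 0)"
proof -
  have "mmult n g (psi n) i k = (\<Sum>j\<in>{1..n}. g i j * psi n j k)"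
    using assms by (simp add: mmult_def)
  also have "\<dots> = (\<Sum>j\<in>{1..n}. if j = k - 1 then (if 2 \<le> k then g i j else 0) else 0)"
    by (rule sum.cong) (use assms in \<open>auto simp: poly_mat_def\<close>)
  finally show ?thesis
    using assms by auto
qed

lemma mmult_psi_left:
  assumes "i \<in> {1..n}" and "k \<in> {1..n}"
  shows "mmult n (psi n) g i k = (if i < n then g (i + 1) k else 0)"
proof -
  have "mmult n (psi n) g i k = (\<Sum>j\<in>{1..n}. psi n i j * g j k)"
    using assms by (simp add: mmult_def)
  also have "\<dots> = (\<Sum>j\<in>{1..n}. if j = i + 1 then g j k else 0)"
    by (rule sum.cong) (use assms in \<open>auto simp: poly_mat_def\<close>)
  finally show ?thesis
    using assms by simp
qed

lemma commutes_with_psi_in_range_poly_mat: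
  assumes g: "g \<in> mats n"
    and comm: "mmult n g (psi n) = mmult n (psi n) g"
  shows "g \<in> range (poly_mat n)"
proof -
  have entry: "mmult n g (psi n) i k = mmult n (psi n) g i k" for i k
    using comm by simp
  have diag: "g (i + 1) (k + 1) = g i k" if "i \<in> {1..<n}" and "k \<in> {1..<n}" for i k
    using entry[of i "k + 1"] mmult_psi_right[of i n "k + 1" g] mmult_psi_left[of i n "k + 1" g] that
    by simp
  have first_col: "g (i + 1) 1 = 0" if "i \<in> {1..<n}" for i
    using entry[of i 1] mmult_psi_right[of i n 1 g] mmult_psi_left[of i n 1 g] that
    by simp
  have along_diag: "g (i + s) (k + s) = g i k" if "1 \<le> i" "1 \<le> k" "i + s \<le> n" "k + s \<le> n" for i k s
    using that
  proof (induction s)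
    case (Suc s)
    then show ?case
      using diag[of "i + s" "k + s"] by simp
  qed simp
  have "g = poly_mat n (\<Sum>t<n. monom (g 1 (t + 1)) t)"
  proof (rule poly_mat_eqI[OF g])
    fix i j assume i: "i \<in> {1..n}" and j: "j \<in> {1..n}"
    show "g i j = (if i \<le> j then g 1 (j - i + 1) else 0)"
    proof (cases "i \<le> j")
      case True
      then show ?thesis
        using along_diag[of 1 "j - i + 1" "i - 1"] i j by simp
    next
      case False
      then have "i - j \<in> {1..<n}"
        using i j by auto
      then show ?thesis
        using along_diag[of "i - j + 1" 1 "j - 1"] first_col[of "i - j"] False i j by simp
    qed
  qed
  then show ?thesis
    by (rule image_eqI) simp
qed

lemma maximal_comm_subalgebra_range_poly_mat:
  "maximal_comm_subalgebra n (range (poly_mat n))"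
proof -
  have "subalgebra n (range (poly_mat n))"
    unfolding subalgebra_def
    by (auto simp: poly_mat_in_mats poly_mat_add poly_mat_smult mmult_poly_mat poly_mat_1[symmetric])
  moreover have "commutative_set n (range (poly_mat n))"
    by (auto simp: commutative_set_def mmult_poly_mat mult.commute)
  moreover have "B = range (poly_mat n)"
    if B: "subalgebra n B" "commutative_set n B" "range (poly_mat n) \<subseteq> B"
    for B :: "(nat \<Rightarrow> nat \<Rightarrow> 'a) set"
  proof
    show "B \<subseteq> range (poly_mat n)"
    proof
      fix g assume "g \<in> B"
      moreover have "psi n \<in> B"
        using B(3) by auto
      ultimately show "g \<in> range (poly_mat n)"
        using B(1,2) by (intro commutes_with_psi_in_range_poly_mat) (auto simp: subalgebra_def commutative_set_def)
    qed
  qed (use B(3) in simp)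
  ultimately show ?thesis
    unfolding maximal_comm_subalgebra_def by blast
qed

theorem lemma3p4:
  fixes d n :: nat
  assumes "d \<ge> 3" and "n \<ge> 1"
  shows "maximal_comm_subalgebra n (centre d n :: (nat \<Rightarrow> nat \<Rightarrow> 'a::{alg_closed_field, field_char_0}) set)"
  using maximal_comm_subalgebra_range_poly_mat
  by (simp add: centre_eq_range_poly_mat[OF assms(1)])

end
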